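(* Let $P\subseteq\{3,4,\ldots,\omega\}$, let $\overline{u}=(F_i)_{i<\omega}$ with arrows $f^m_n\in\ddagger\mathcal{F}_P(F_m,F_n)$ be a Fraïssé sequence for the category $\ddagger\mathcal{F}_P$, and let $(\mathbb{F},E)$ be its limit. Then $E\subseteq\mathrm{End}(\mathbb{F})$ and $E$ is dense in $\mathbb{F}$.
   Context: Graphs have reflexive symmetric edge relations; finite graphs are discrete. An epimorphism $f\colon B\to A$ is a surjection with $\langle a_1,a_2\rangle$ an edge iff some $b_i\in f^{-1}(a_i)$ form an edge; monotone if fibres induce connected subgraphs. In a finite tree, $\mathrm{ord}(a)$ is the number of neighbours other than $a$; endpoints have order $\le1$, ramification points order $\ge3$; $\mathrm{End}(A)$ is the set of endpoints. For monotone $f\colon B\to A$ of finite trees and $a$ with $\mathrm{ord}(a)=n\ge3$, $a$ is a point of weak coherence witnessed by $b$ if $b\in f^{-1}(a)$, $\mathrm{ord}(b)=m\ge n$, and an injection $p\colon n\to m$ satisfies $f^{-1}(A_i)\subseteq B_{p(i)}$ ($A_i$, $B_j$ the components of $A\setminus\{a\}$, $B\setminus\{b\}$); weakly coherent if this holds at all ramification points. Category $\ddagger\mathcal{F}_P$: objects are finite trees with at least one ramification point, every vertex an endpoint or ramification point, each ramification point $a$ carrying exactly one label $p\in P$ with $\mathrm{ord}(a)\le p$, endpoints unlabeled; arrows $f\in\ddagger\mathcal{F}_P(B,A)$ are pairs $(p(f),e(f))$ with $p(f)\colon B\to A$ a weakly coherent monotone epimorphism such that witnesses of weak coherence at vertices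 labeled $p$ are labeled $p$, and $e(f)\colon\mathrm{End}(A)\to\mathrm{End}(B)$ with $p(f)\circ e(f)=\mathrm{Id}$; composition $f\circ g=(p(f)\circ p(g),e(g)\circ e(f))$. A Fraïssé sequence: (1) every object $x$ admits an arrow $F_n\to x$ for some $n$; (2) for every arrow $f\colon y\to F_n$ there are $m\ge n$ and $g\colon F_m\to y$ with $f\circ g=f^m_n$. The limit $(\mathbb{F},E)$: $\mathbb{F}\subseteq\prod F_i$ is the inverse limit of the maps $p(f^m_n)$ as topological graphs (product topology, coordinatewise edges), and $E\subseteq\mathbb{F}$ is the direct limit of the embedding parts, i.e. the set of points $x\in\mathbb{F}$ for which there are $m$ and $y\in\mathrm{End}(F_m)$ with $x_k=e(f^k_m)(y)$ for all $k\ge m$. Endpoints of the topological graph $\mathbb{F}$: a topological graph is connected if its vertex set cannot be split into two nonempty disjoint closed sets with no edges between them; an arc is a connected topological graph whose removal of any vertex other than at most two (its endpoints) disconnects it; $x\in\mathbb{F}$ is an endpoint if for every arc $H$ and every embedding (edge-preserving and reflecting homeomorphism onto image) $H\to\mathbb{F}$ with $x$ in the image, $x$ is the image of an endpoint of $H$. *)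

theory Defs
  imports "HOL-Analysis.Analysis" "HOL-Library.Extended_Nat"
begin

text \<open>Vertices are natural numbers. Labels: None = unlabeled, Some p with p an extended
natural (\<infinity> plays the role of \<omega>).\<close>

record tobj =
  V   :: "nat set"
  Ed  :: "nat \<Rightarrow> nat \<Rightarrow> bool"
  lab :: "nat \<Rightarrow> enat option"

definition fgraph :: "tobj \<Rightarrow> bool" where
  "fgraph A \<longleftrightarrow> finite (V A) \<and> (\<forall>x y. Ed A x y \<longrightarrow> x \<in> V A \<and> y \<in> V A)
     \<and> (\<forall>x\<in>V A. Ed A x x) \<and> (\<forall>x y. Ed A x y \<longrightarrow> Ed A y x)"

definition conn_on :: "('a \<Rightarrow> 'a \<Rightarrow> bool) \<Rightarrow> 'a set \<Rightarrow> bool" where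
  "conn_on E S \<longleftrightarrow> \<not> (\<exists>X Y. X \<noteq> {} \<and> Y \<noteq> {} \<and> X \<inter> Y = {} \<and> X \<union> Y = S
        \<and> (\<forall>x\<in>X. \<forall>y\<in>Y. \<not> E x y))"

definition components :: "('a \<Rightarrow> 'a \<Rightarrow> bool) \<Rightarrow> 'a set \<Rightarrow> 'a set set" where
  "components E S = {C. C \<subseteq> S \<and> C \<noteq> {} \<and> conn_on E C \<and>
        (\<forall>D. C \<subseteq> D \<and> D \<subseteq> S \<and> conn_on E D \<longrightarrow> D = C)}"

definition has_cycle :: "tobj \<Rightarrow> bool" where
  "has_cycle A \<longleftrightarrow> (\<exists>xs. distinct xs \<and> length xs \<ge> 3 \<and> set xs \<subseteq> V A
       \<and> (\<forall>i. i + 1 < length xs \<longrightarrow> Ed A (xs ! i) (xs ! (i + 1)))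
       \<and> Ed A (last xs) (hd xs))"

definition ftree :: "tobj \<Rightarrow> bool" where
  "ftree A \<longleftrightarrow> fgraph A \<and> V A \<noteq> {} \<and> conn_on (Ed A) (V A) \<and> \<not> has_cycle A"

definition ord :: "tobj \<Rightarrow> nat \<Rightarrow> nat" where
  "ord A a = card {b \<in> V A. b \<noteq> a \<and> Ed A a b}"

definition Ends :: "tobj \<Rightarrow> nat set" where
  "Ends A = {a \<in> V A. ord A a \<le> 1}"

definition ram :: "tobj \<Rightarrow> nat set" where
  "ram A = {a \<in> V A. ord A a \<ge> 3}"

definition comps_minus :: "tobj \<Rightarrow> nat \<Rightarrow> nat set set" where
  "comps_minus A a = components (Ed A) (V A - {a})"

definition obj :: "enat set \<Rightarrow> tobj \<Rightarrow> bool" where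
  "obj P A \<longleftrightarrow> ftree A \<and> ram A \<noteq> {} \<and> (\<forall>a\<in>V A. a \<in> Ends A \<or> a \<in> ram A)
     \<and> (\<forall>a\<in>ram A. \<exists>p\<in>P. lab A a = Some p \<and> enat (ord A a) \<le> p)
     \<and> (\<forall>a\<in>Ends A. lab A a = None)"

definition epi :: "tobj \<Rightarrow> tobj \<Rightarrow> (nat \<Rightarrow> nat) \<Rightarrow> bool" where
  "epi B A f \<longleftrightarrow> (\<forall>b\<in>V B. f b \<in> V A) \<and> f ` V B = V A \<and>
     (\<forall>a1\<in>V A. \<forall>a2\<in>V A. Ed A a1 a2 \<longleftrightarrow>
        (\<exists>b1\<in>V B. \<exists>b2\<in>V B. f b1 = a1 \<and> f b2 = a2 \<and> Ed B b1 b2))"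

definition monotone_map :: "tobj \<Rightarrow> tobj \<Rightarrow> (nat \<Rightarrow> nat) \<Rightarrow> bool" where
  "monotone_map B A f \<longleftrightarrow> (\<forall>a\<in>V A. conn_on (Ed B) {b \<in> V B. f b = a})"

text \<open>b witnesses weak coherence of f at a: the injection p : n \<rightarrow> m between index sets of
components is represented as an injection between the sets of components.\<close>
definition wc_witness :: "tobj \<Rightarrow> tobj \<Rightarrow> (nat \<Rightarrow> nat) \<Rightarrow> nat \<Rightarrow> nat \<Rightarrow> bool" where
  "wc_witness B A f a b \<longleftrightarrow> b \<in> V B \<and> f b = a \<and> ord B b \<ge> ord A a \<and>
     (\<exists>\<pi>. inj_on \<pi> (comps_minus A a) \<and>
        (\<forall>C\<in>comps_minus A a. \<pi> C \<in> comps_minus B b \<and> {x \<in> V B. f x \<in> C} \<subseteq> \<pi> C))"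

definition weakly_coherent :: "tobj \<Rightarrow> tobj \<Rightarrow> (nat \<Rightarrow> nat) \<Rightarrow> bool" where
  "weakly_coherent B A f \<longleftrightarrow> (\<forall>a\<in>ram A. \<exists>b. wc_witness B A f a b)"

type_synonym arr = "(nat \<Rightarrow> nat) \<times> (nat \<Rightarrow> nat)"

definition arrow :: "enat set \<Rightarrow> tobj \<Rightarrow> tobj \<Rightarrow> arr \<Rightarrow> bool" where
  "arrow P B A f \<longleftrightarrow> obj P B \<and> obj P A \<and>
     epi B A (fst f) \<and> monotone_map B A (fst f) \<and> weakly_coherent B A (fst f) \<and>
     (\<forall>a\<in>ram A. \<forall>b. wc_witness B A (fst f) a b \<longrightarrow> lab B b = lab A a) \<and>
     (\<forall>y\<in>Ends A. snd f y \<in> Ends B \<and> fst f (snd f y) = y)"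

text \<open>Equality of arrows B \<rightarrow> A (functions compared on their domains).\<close>
definition arr_eq :: "tobj \<Rightarrow> tobj \<Rightarrow> arr \<Rightarrow> arr \<Rightarrow> bool" where
  "arr_eq B A f g \<longleftrightarrow> (\<forall>x\<in>V B. fst f x = fst g x) \<and> (\<forall>y\<in>Ends A. snd f y = snd g y)"

definition comp_arr :: "arr \<Rightarrow> arr \<Rightarrow> arr" where
  "comp_arr f g = (fst f \<circ> fst g, snd g \<circ> snd f)"

text \<open>f m n is the arrow f^m_n : F m \<rightarrow> F n (for n \<le> m).\<close>
definition fraisse_seq :: "enat set \<Rightarrow> (nat \<Rightarrow> tobj) \<Rightarrow> (nat \<Rightarrow> nat \<Rightarrow> arr) \<Rightarrow> bool" where
  "fraisse_seq P F f \<longleftrightarrow>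
     (\<forall>n. obj P (F n)) \<and>
     (\<forall>n m. n \<le> m \<longrightarrow> arrow P (F m) (F n) (f m n)) \<and>
     (\<forall>n. arr_eq (F n) (F n) (f n n) (id, id)) \<and>
     (\<forall>n m k. n \<le> m \<longrightarrow> m \<le> k \<longrightarrow> arr_eq (F k) (F n) (comp_arr (f m n) (f k m)) (f k n)) \<and>
     (\<forall>x. obj P x \<longrightarrow> (\<exists>n g. arrow P (F n) x g)) \<and>
     (\<forall>n y g. arrow P y (F n) g \<longrightarrow>
        (\<exists>m\<ge>n. \<exists>h. arrow P (F m) y h \<and> arr_eq (F m) (F n) (comp_arr g h) (f m n)))"

definition limF :: "(nat \<Rightarrow> tobj) \<Rightarrow> (nat \<Rightarrow> nat \<Rightarrow> arr) \<Rightarrow> (nat \<Rightarrow> nat) set" where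
  "limF F f = {x. (\<forall>i. x i \<in> V (F i)) \<and> (\<forall>n m. n \<le> m \<longrightarrow> fst (f m n) (x m) = x n)}"

definition limE :: "(nat \<Rightarrow> tobj) \<Rightarrow> (nat \<Rightarrow> nat \<Rightarrow> arr) \<Rightarrow> (nat \<Rightarrow> nat) set" where
  "limE F f = {x \<in> limF F f. \<exists>m. \<exists>y\<in>Ends (F m). \<forall>k\<ge>m. x k = snd (f k m) y}"

definition limT :: "(nat \<Rightarrow> tobj) \<Rightarrow> (nat \<Rightarrow> nat \<Rightarrow> arr) \<Rightarrow> (nat \<Rightarrow> nat) topology" where
  "limT F f = subtopology (product_topology (\<lambda>i. discrete_topology (V (F i))) UNIV) (limF F f)"

definition limEd :: "(nat \<Rightarrow> tobj) \<Rightarrow> (nat \<Rightarrow> nat) \<Rightarrow> (nat \<Rightarrow> nat) \<Rightarrow> bool" where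
  "limEd F x y \<longleftrightarrow> (\<forall>i. Ed (F i) (x i) (y i))"

definition tg_graph :: "'a topology \<Rightarrow> ('a \<Rightarrow> 'a \<Rightarrow> bool) \<Rightarrow> bool" where
  "tg_graph T E \<longleftrightarrow> (\<forall>x\<in>topspace T. E x x) \<and>
     (\<forall>x\<in>topspace T. \<forall>y\<in>topspace T. E x y \<longrightarrow> E y x)"

definition tg_connected :: "'a topology \<Rightarrow> ('a \<Rightarrow> 'a \<Rightarrow> bool) \<Rightarrow> bool" where
  "tg_connected T E \<longleftrightarrow> \<not> (\<exists>X Y. closedin T X \<and> closedin T Y \<and> X \<noteq> {} \<and> Y \<noteq> {} \<and>
      X \<inter> Y = {} \<and> X \<union> Y = topspace T \<and> (\<forall>x\<in>X. \<forall>y\<in>Y. \<not> E x y))"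

definition arc_ends :: "'a topology \<Rightarrow> ('a \<Rightarrow> 'a \<Rightarrow> bool) \<Rightarrow> 'a set" where
  "arc_ends T E = {v \<in> topspace T. tg_connected (subtopology T (topspace T - {v})) E}"

definition is_arc :: "'a topology \<Rightarrow> ('a \<Rightarrow> 'a \<Rightarrow> bool) \<Rightarrow> bool" where
  "is_arc T E \<longleftrightarrow> tg_graph T E \<and> tg_connected T E \<and> finite (arc_ends T E) \<and> card (arc_ends T E) \<le> 2"

text \<open>Endpoint of a topological graph, tested against all arcs whose carrier lives in type 'h.
Stated with a free type variable 'h in a theorem, this means: for arcs of every type.\<close>
definition tg_endpoint :: "'h itself \<Rightarrow> 'a topology \<Rightarrow> ('a \<Rightarrow> 'a \<Rightarrow> bool) \<Rightarrow> 'a \<Rightarrow> bool" where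
  "tg_endpoint _ X EG x \<longleftrightarrow> x \<in> topspace X \<and>
     (\<forall>(T::'h topology) EH h. is_arc T EH \<and> embedding_map T X h \<and>
        (\<forall>u\<in>topspace T. \<forall>v\<in>topspace T. EH u v \<longleftrightarrow> EG (h u) (h v)) \<and>
        x \<in> h ` topspace T \<longrightarrow> x \<in> h ` arc_ends T EH)"

end

theory Submission
  imports Defs
begin

(*
  Endpoints: if x is in E, then from some level K on, x K is an endpoint of F K. Monotone maps
  have connected fibres, and in a tree two disjoint subtrees are joined by at most one edge, so
  all neighbours of the thread x outside the clopen set {y. y K = x K} coincide. An arc through
  x in which x is not an end would have two sides, each of which must enter that clopen set
  through an edge; their two outside neighbours coincide, contradicting injectivity.

  Density: every vertex a of F n lies under an endpoint of some later F m. For a ramification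
  point a, subdivide an edge at a by a new vertex w labelled like a, hang a new endpoint z on w,
  and collapse {a, w, z} to a; this is an arrow of the category, and the Fraisse property
  factors f m n through it, which carries z to an endpoint of F m over a.
*)

section \<open>Paths, cycles and connectedness\<close>

lemma card_insert_Diff_swap:
  assumes "finite N" "x \<in> N" "y \<notin> N"
  shows "card (insert y (N - {x})) = card N"
  using assms by (simp add: card_Diff_singleton card_gt_0_iff) (metis Suc_pred card_gt_0_iff empty_iff)

lemma successively_distinct_path:
  assumes "successively E xs" "xs \<noteq> []"
  shows "\<exists>ys. successively E ys \<and> distinct ys \<and> ys \<noteq> [] \<and> hd ys = hd xs \<and> last ys = last xs
           \<and> set ys \<subseteq> set xs"
  using assms
proof (induction xs)
  case Nil
  then show ?case by simp
next
  case (Cons x xs)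
  show ?case
  proof (cases "xs = []")
    case True
    then show ?thesis by (intro exI[of _ "[x]"]) auto
  next
    case False
    then have "successively E xs" "E x (hd xs)"
      using Cons.prems by (auto simp: successively_Cons)
    then obtain ys where ys: "successively E ys" "distinct ys" "ys \<noteq> []" "hd ys = hd xs"
      "last ys = last xs" "set ys \<subseteq> set xs"
      using Cons.IH False by blast
    show ?thesis
    proof (cases "x \<in> set ys")
      case False
      then show ?thesis
        using ys \<open>E x (hd xs)\<close> \<open>xs \<noteq> []\<close> by (intro exI[of _ "x # ys"]) (auto simp: successively_Cons)
    next
      case True
      then obtain us vs where "ys = us @ x # vs" by (meson split_list)
      then show ?thesis
        using ys \<open>xs \<noteq> []\<close>
        by (intro exI[of _ "x # vs"]) (auto simp: successively_append_iff)
    qed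
  qed
qed

lemma conn_on_path:
  assumes "conn_on E S" "a \<in> S" "b \<in> S"
  shows "\<exists>ps. successively E ps \<and> distinct ps \<and> ps \<noteq> [] \<and> hd ps = a \<and> last ps = b \<and> set ps \<subseteq> S"
proof -
  define R where
    "R = {v \<in> S. \<exists>ps. successively E ps \<and> ps \<noteq> [] \<and> hd ps = a \<and> last ps = v \<and> set ps \<subseteq> S}"
  have "a \<in> R"
    unfolding R_def using assms(2) by (intro CollectI conjI exI[of _ "[a]"]) auto
  moreover have "\<not> E x y" if "x \<in> R" "y \<in> S - R" for x y
  proof
    assume "E x y"
    obtain ps where "successively E ps" "ps \<noteq> []" "hd ps = a" "last ps = x" "set ps \<subseteq> S"
      using \<open>x \<in> R\<close> unfolding R_def by blast
    then have "y \<in> R"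
      unfolding R_def using \<open>y \<in> S - R\<close> \<open>E x y\<close>
      by (intro CollectI conjI exI[of _ "ps @ [y]"]) (auto simp: successively_append_iff)
    then show False using \<open>y \<in> S - R\<close> by blast
  qed
  moreover have "R \<subseteq> S" unfolding R_def by blast
  ultimately have "S - R = {}"
    using assms(1) unfolding conn_on_def by (metis Diff_disjoint Diff_partition empty_iff)
  then obtain ps where "successively E ps" "ps \<noteq> []" "hd ps = a" "last ps = b" "set ps \<subseteq> S"
    using assms(3) unfolding R_def by blast
  then show ?thesis using successively_distinct_path by (metis order_trans)
qed

lemma has_cycle_iff_successively:
  "has_cycle A \<longleftrightarrow> (\<exists>xs. distinct xs \<and> 3 \<le> length xs \<and> set xs \<subseteq> V A
     \<and> successively (Ed A) xs \<and> Ed A (last xs) (hd xs))"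
  unfolding has_cycle_def successively_conv_nth by auto

lemma successively_distinct_neighbour:
  "successively E ys \<Longrightarrow> distinct ys \<Longrightarrow> 2 \<le> length ys \<Longrightarrow> v \<in> set ys
    \<Longrightarrow> \<exists>u\<in>set ys. u \<noteq> v \<and> (E v u \<or> E u v)"
proof (induction ys)
  case Nil
  then show ?case by simp
next
  case (Cons x ys)
  then obtain y ys' where ys: "ys = y # ys'" by (cases ys) auto
  show ?case
  proof (cases "v = x \<or> ys' = []")
    case True
    then show ?thesis using Cons.prems ys by auto
  next
    case False
    then have "2 \<le> length ys" using ys by (cases ys') auto
    then show ?thesis using Cons False ys by auto
  qed
qed

lemma cycle_rotate:
  assumes "successively E (us @ w # vs)" "E (last (us @ w # vs)) (hd (us @ w # vs))"
  shows "successively E (w # vs @ us) \<and> E (last (w # vs @ us)) w"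
  using assms by (cases "us = []"; cases "vs = []") (auto simp: successively_append_iff successively_Cons)

lemma ftree_unique_edge_between:
  assumes "ftree B" "Z \<subseteq> V B" "W \<subseteq> V B" "Z \<inter> W = {}" "conn_on (Ed B) Z" "conn_on (Ed B) W"
    "z \<in> Z" "z' \<in> Z" "w \<in> W" "w' \<in> W" "Ed B w z" "Ed B w' z'"
  shows "w = w'"
proof (rule ccontr)
  txt \<open>Otherwise a path from \<open>z\<close> to \<open>z'\<close> in \<open>Z\<close>, the edge to \<open>w'\<close>, a path from \<open>w'\<close>
    to \<open>w\<close> in \<open>W\<close> and the edge back to \<open>z\<close> form a cycle.\<close>
  assume "w \<noteq> w'"
  obtain pZ where pZ: "successively (Ed B) pZ" "distinct pZ" "pZ \<noteq> []" "hd pZ = z" "last pZ = z'"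
    "set pZ \<subseteq> Z"
    using conn_on_path[OF assms(5,7,8)] by blast
  obtain pW where pW: "successively (Ed B) pW" "distinct pW" "pW \<noteq> []" "hd pW = w'" "last pW = w"
    "set pW \<subseteq> W"
    using conn_on_path[OF assms(6,10,9)] by blast
  have "Ed B z' w'"
    using assms(1,12) unfolding ftree_def fgraph_def by blast
  then have "successively (Ed B) (pZ @ pW)"
    using pZ pW by (simp add: successively_append_iff)
  moreover have "length pW \<ge> 2"
    using pW \<open>w \<noteq> w'\<close> by (cases pW) (auto split: if_splits simp: Suc_le_eq)
  then have "3 \<le> length (pZ @ pW)"
    using pZ(3) by (cases pZ) auto
  moreover have "distinct (pZ @ pW)" "set (pZ @ pW) \<subseteq> V B"
    using pZ pW assms(2-4) by auto
  moreover have "Ed B (last (pZ @ pW)) (hd (pZ @ pW))"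
    using pZ pW assms(11) by simp
  ultimately have "has_cycle B"
    unfolding has_cycle_iff_successively by blast
  then show False using assms(1) unfolding ftree_def by blast
qed

lemma conn_onD:
  "conn_on E S \<Longrightarrow> X \<noteq> {} \<Longrightarrow> Y \<noteq> {} \<Longrightarrow> X \<inter> Y = {} \<Longrightarrow> X \<union> Y = S
    \<Longrightarrow> \<forall>x\<in>X. \<forall>y\<in>Y. \<not> E x y \<Longrightarrow> False"
  unfolding conn_on_def by blast

lemma conn_on_singleton: "conn_on E {x}"
  unfolding conn_on_def
proof
  assume "\<exists>X Y. X \<noteq> {} \<and> Y \<noteq> {} \<and> X \<inter> Y = {} \<and> X \<union> Y = {x} \<and> (\<forall>x\<in>X. \<forall>y\<in>Y. \<not> E x y)"
  then obtain X Y where "X \<noteq> {}" "Y \<noteq> {}" "X \<inter> Y = {}" "X \<union> Y = {x}"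
    by blast
  then show False by (metis Int_absorb Un_singleton_iff)
qed

lemma conn_on_path3:
  assumes "E p q" "E q p" "E q s" "E s q"
  shows "conn_on E {p, q, s}"
  unfolding conn_on_def
proof
  assume "\<exists>X Y. X \<noteq> {} \<and> Y \<noteq> {} \<and> X \<inter> Y = {} \<and> X \<union> Y = {p, q, s} \<and> (\<forall>x\<in>X. \<forall>y\<in>Y. \<not> E x y)"
  then obtain X Y where H: "X \<noteq> {}" "Y \<noteq> {}" "X \<inter> Y = {}" "X \<union> Y = {p, q, s}"
    "\<forall>x\<in>X. \<forall>y\<in>Y. \<not> E x y"
    by blast
  show False
  proof (cases "q \<in> X")
    case True
    then have "p \<notin> Y" "q \<notin> Y" "s \<notin> Y" using H(3,5) assms(2,3) by auto
    then show False using H(2,4) by auto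
  next
    case False
    then have "q \<in> Y" using H(4) by auto
    then have "p \<notin> X" "s \<notin> X" using H(5) assms(1,4) by auto
    then show False using H(1,4) False by auto
  qed
qed

lemma conn_on_image:
  assumes "conn_on EB D" "\<And>u v. u \<in> D \<Longrightarrow> v \<in> D \<Longrightarrow> EB u v \<Longrightarrow> EA (r u) (r v)"
  shows "conn_on EA (r ` D)"
  unfolding conn_on_def
proof
  assume "\<exists>X Y. X \<noteq> {} \<and> Y \<noteq> {} \<and> X \<inter> Y = {} \<and> X \<union> Y = r ` D \<and> (\<forall>x\<in>X. \<forall>y\<in>Y. \<not> EA x y)"
  then obtain X Y where H: "X \<noteq> {}" "Y \<noteq> {}" "X \<inter> Y = {}" "X \<union> Y = r ` D"
    "\<forall>x\<in>X. \<forall>y\<in>Y. \<not> EA x y"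
    by blast
  show False
  proof (rule conn_onD[OF assms(1)])
    have "X \<subseteq> r ` D" "Y \<subseteq> r ` D"
      using H(4) by auto
    then show "{u \<in> D. r u \<in> X} \<noteq> {}" "{u \<in> D. r u \<in> Y} \<noteq> {}"
      using H(1,2) by (fastforce simp flip: ex_in_conv)+
    show "{u \<in> D. r u \<in> X} \<inter> {u \<in> D. r u \<in> Y} = {}" "{u \<in> D. r u \<in> X} \<union> {u \<in> D. r u \<in> Y} = D"
      using H(3,4) by auto
    show "\<forall>x\<in>{u \<in> D. r u \<in> X}. \<forall>y\<in>{u \<in> D. r u \<in> Y}. \<not> EB x y"
      using H(5) assms(2) by auto
  qed
qed

text \<open>\<open>epi\<close> together with \<open>monotone_map\<close>, relativised to arbitrary vertex sets so that it
  survives the removal of a fibre.\<close>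

definition monotone_epi_on ::
    "('b \<Rightarrow> 'b \<Rightarrow> bool) \<Rightarrow> 'b set \<Rightarrow> ('a \<Rightarrow> 'a \<Rightarrow> bool) \<Rightarrow> 'a set \<Rightarrow> ('b \<Rightarrow> 'a) \<Rightarrow> bool" where
  "monotone_epi_on EB SB EA SA r \<longleftrightarrow> r ` SB = SA
     \<and> (\<forall>u\<in>SB. \<forall>v\<in>SB. EB u v \<longrightarrow> EA (r u) (r v))
     \<and> (\<forall>p\<in>SA. \<forall>q\<in>SA. EA p q \<longrightarrow> (\<exists>u\<in>SB. \<exists>v\<in>SB. r u = p \<and> r v = q \<and> EB u v))
     \<and> (\<forall>q\<in>SA. conn_on EB {u \<in> SB. r u = q})"

lemma monotone_epi_onD:
  assumes "monotone_epi_on EB SB EA SA r"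
  shows "r ` SB = SA"
    and "\<And>u v. u \<in> SB \<Longrightarrow> v \<in> SB \<Longrightarrow> EB u v \<Longrightarrow> EA (r u) (r v)"
    and "\<And>p q. p \<in> SA \<Longrightarrow> q \<in> SA \<Longrightarrow> EA p q \<Longrightarrow> \<exists>u\<in>SB. \<exists>v\<in>SB. r u = p \<and> r v = q \<and> EB u v"
    and "\<And>q. q \<in> SA \<Longrightarrow> conn_on EB {u \<in> SB. r u = q}"
  using assms unfolding monotone_epi_on_def by blast+

lemma epi_monotone_mapI:
  assumes "monotone_epi_on (Ed B) (V B) (Ed A) (V A) r"
  shows "epi B A r \<and> monotone_map B A r"
proof -
  note onto = monotone_epi_onD(1)[OF assms] and edge = monotone_epi_onD(2)[OF assms]
    and lift = monotone_epi_onD(3)[OF assms] and fibres = monotone_epi_onD(4)[OF assms]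
  have "epi B A r"
    unfolding epi_def
  proof (intro conjI ballI iffI)
    show "\<And>b. b \<in> V B \<Longrightarrow> r b \<in> V A" "r ` V B = V A" using onto by auto
    show "\<And>p q. p \<in> V A \<Longrightarrow> q \<in> V A \<Longrightarrow> Ed A p q \<Longrightarrow> \<exists>u\<in>V B. \<exists>v\<in>V B. r u = p \<and> r v = q \<and> Ed B u v"
      using lift by blast
    show "\<And>p q. \<exists>u\<in>V B. \<exists>v\<in>V B. r u = p \<and> r v = q \<and> Ed B u v \<Longrightarrow> Ed A p q"
      using edge by blast
  qed
  moreover have "monotone_map B A r"
    unfolding monotone_map_def using fibres by blast
  ultimately show ?thesis ..
qed

lemma monotone_epi_on_remove_fibre:
  assumes "monotone_epi_on EB SB EA SA r"
  shows "monotone_epi_on EB {u \<in> SB. r u \<noteq> c} EA (SA - {c}) r"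
proof -
  note onto = monotone_epi_onD(1)[OF assms] and edge = monotone_epi_onD(2)[OF assms]
    and lift = monotone_epi_onD(3)[OF assms] and fibres = monotone_epi_onD(4)[OF assms]
  let ?SB' = "{u \<in> SB. r u \<noteq> c}"
  have "r ` ?SB' = SA - {c}"
    using onto by auto
  moreover have "\<exists>u\<in>?SB'. \<exists>v\<in>?SB'. r u = p \<and> r v = q \<and> EB u v"
    if "p \<in> SA - {c}" "q \<in> SA - {c}" "EA p q" for p q
    using lift that by fastforce
  moreover have "{u \<in> ?SB'. r u = q} = {u \<in> SB. r u = q}" if "q \<noteq> c" for q
    using that by auto
  ultimately show ?thesis
    unfolding monotone_epi_on_def using edge fibres by auto
qed

lemma image_Collect_vimage:
  assumes "r ` SB = SA" "Q \<subseteq> SA"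
  shows "r ` {u \<in> SB. r u \<in> Q} = Q"
proof
  show "Q \<subseteq> r ` {u \<in> SB. r u \<in> Q}"
  proof
    fix q assume "q \<in> Q"
    then obtain u where "u \<in> SB" "r u = q"
      using assms by (metis imageE subsetD)
    then show "q \<in> r ` {u \<in> SB. r u \<in> Q}"
      using \<open>q \<in> Q\<close> by blast
  qed
qed auto

lemma separation_image_disjoint:
  assumes fibres: "\<And>q. q \<in> SA \<Longrightarrow> conn_on EB {u \<in> SB. r u = q}" and "Q \<subseteq> SA"
    and sep: "X \<inter> Y = {}" "X \<union> Y = {u \<in> SB. r u \<in> Q}" "\<forall>x\<in>X. \<forall>y\<in>Y. \<not> EB x y"
    and "u \<in> X" "v \<in> Y"
  shows "r u \<noteq> r v"
proof
  assume "r u = r v"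
  define Fq where "Fq = {w \<in> SB. r w = r u}"
  have u: "u \<in> SB" "r u \<in> Q" and v: "v \<in> SB"
    using \<open>u \<in> X\<close> \<open>v \<in> Y\<close> sep(2) by auto
  then have "conn_on EB Fq"
    using fibres \<open>Q \<subseteq> SA\<close> unfolding Fq_def by auto
  moreover have "Fq \<inter> X \<noteq> {}" "Fq \<inter> Y \<noteq> {}"
    using \<open>u \<in> X\<close> \<open>v \<in> Y\<close> u v \<open>r u = r v\<close> unfolding Fq_def by auto
  moreover have "Fq \<inter> X \<inter> (Fq \<inter> Y) = {}"
    using sep(1) by auto
  moreover have "Fq \<subseteq> X \<union> Y"
    unfolding sep(2) Fq_def using u(2) by auto
  then have "Fq \<inter> X \<union> Fq \<inter> Y = Fq"
    by blast
  moreover have "\<forall>x\<in>Fq \<inter> X. \<forall>y\<in>Fq \<inter> Y. \<not> EB x y"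
    using sep(3) by blast
  ultimately show False
    by (rule conn_onD)
qed

lemma conn_on_vimage:
  assumes r: "monotone_epi_on EB SB EA SA r" and Q: "conn_on EA Q" "Q \<subseteq> SA"
  shows "conn_on EB {u \<in> SB. r u \<in> Q}"
  unfolding conn_on_def
proof
  note onto = monotone_epi_onD(1)[OF r] and lift = monotone_epi_onD(3)[OF r]
  assume "\<exists>X Y. X \<noteq> {} \<and> Y \<noteq> {} \<and> X \<inter> Y = {} \<and> X \<union> Y = {u \<in> SB. r u \<in> Q}
            \<and> (\<forall>x\<in>X. \<forall>y\<in>Y. \<not> EB x y)"
  then obtain X Y where H: "X \<noteq> {}" "Y \<noteq> {}" "X \<inter> Y = {}" "X \<union> Y = {u \<in> SB. r u \<in> Q}"
    "\<forall>x\<in>X. \<forall>y\<in>Y. \<not> EB x y"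
    by blast
  note fibre_split = separation_image_disjoint[OF monotone_epi_onD(4)[OF r] Q(2) H(3-5)]
  show False
  proof (rule conn_onD[OF Q(1)])
    show "r ` X \<noteq> {}" "r ` Y \<noteq> {}"
      using H(1,2) by simp_all
    show "r ` X \<inter> r ` Y = {}"
    proof (rule equals0I)
      fix p assume "p \<in> r ` X \<inter> r ` Y"
      then obtain x y where "x \<in> X" "y \<in> Y" "r x = p" "r y = p"
        by (metis IntD1 IntD2 imageE)
      then show False using fibre_split[of x y] by simp
    qed
    have "r ` {u \<in> SB. r u \<in> Q} = Q"
      using image_Collect_vimage[OF onto Q(2)] .
    then show "r ` X \<union> r ` Y = Q"
      unfolding image_Un[symmetric] H(4) .
    show "\<forall>p\<in>r ` X. \<forall>q\<in>r ` Y. \<not> EA p q"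
    proof (intro ballI notI)
      fix p q assume p: "p \<in> r ` X" and q: "q \<in> r ` Y" and "EA p q"
      have "p \<in> Q" "q \<in> Q" using p q H(4) by blast+
      with \<open>EA p q\<close> obtain u v where uv: "u \<in> SB" "v \<in> SB" "r u = p" "r v = q" "EB u v"
        using lift Q(2) by blast
      then have "u \<in> X \<union> Y" "v \<in> X \<union> Y"
        using \<open>p \<in> Q\<close> \<open>q \<in> Q\<close> H(4) by blast+
      moreover have "u \<notin> Y"
        using p uv(3) fibre_split by (metis imageE)
      moreover have "v \<notin> X"
        using q uv(4) fibre_split by (metis imageE)
      ultimately show False using H(5) uv(5) by blast
    qed
  qed
qed

lemma components_vimage:
  assumes r: "monotone_epi_on EB SB EA SA r" and C: "C \<in> components EA SA"
  shows "{u \<in> SB. r u \<in> C} \<in> components EB SB"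
proof -
  have C_sub: "C \<subseteq> SA" and "C \<noteq> {}" "conn_on EA C"
    and C_max: "\<And>D. C \<subseteq> D \<Longrightarrow> D \<subseteq> SA \<Longrightarrow> conn_on EA D \<Longrightarrow> D = C"
    using C unfolding components_def by auto
  note onto = monotone_epi_onD(1)[OF r] and edge = monotone_epi_onD(2)[OF r]
  have C_lift: "r ` {u \<in> SB. r u \<in> C} = C"
    using image_Collect_vimage[OF onto C_sub] .
  then have nonempty: "{u \<in> SB. r u \<in> C} \<noteq> {}"
    using \<open>C \<noteq> {}\<close> by auto
  have maximal: "D = {u \<in> SB. r u \<in> C}"
    if D: "{u \<in> SB. r u \<in> C} \<subseteq> D" "D \<subseteq> SB" "conn_on EB D" for D
  proof -
    have "conn_on EA (r ` D)"
      using conn_on_image[OF D(3)] edge D(2) by blast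
    moreover have "r ` {u \<in> SB. r u \<in> C} \<subseteq> r ` D"
      using D(1) by (rule image_mono)
    then have "C \<subseteq> r ` D"
      unfolding C_lift .
    moreover have "r ` D \<subseteq> SA"
      using D(2) onto by blast
    ultimately have "r ` D = C" using C_max by simp
    then show ?thesis using D(1,2) by blast
  qed
  show ?thesis
    unfolding components_def
  proof (intro CollectI conjI allI impI)
    show "conn_on EB {u \<in> SB. r u \<in> C}"
      using conn_on_vimage[OF r \<open>conn_on EA C\<close> C_sub] .
  qed (use nonempty maximal in auto)
qed

lemma obj_fgraph: "obj P A \<Longrightarrow> fgraph A"
  unfolding obj_def ftree_def by blast

lemma Ends_subset_V: "Ends A \<subseteq> V A"
  unfolding Ends_def by blast

lemma arrow_fst_in_V: "arrow P B A g \<Longrightarrow> u \<in> V B \<Longrightarrow> fst g u \<in> V A"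
  unfolding arrow_def epi_def by blast

lemma arrow_snd_in_Ends: "arrow P B A g \<Longrightarrow> y \<in> Ends A \<Longrightarrow> snd g y \<in> Ends B \<and> fst g (snd g y) = y"
  unfolding arrow_def by blast

lemma Ends_neighbour_unique:
  assumes "fgraph A" "x \<in> Ends A" "b \<in> V A" "b' \<in> V A" "b \<noteq> x" "b' \<noteq> x"
    "Ed A x b" "Ed A x b'"
  shows "b = b'"
proof -
  let ?N = "{b \<in> V A. b \<noteq> x \<and> Ed A x b}"
  have "card ?N \<le> Suc 0" using assms(2) unfolding Ends_def ord_def by simp
  moreover have "finite ?N" using assms(1) unfolding fgraph_def by simp
  moreover have "b \<in> ?N" "b' \<in> ?N" using assms(3-8) by auto
  ultimately show ?thesis using card_le_Suc0_iff_eq by blast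
qed

lemma fraisse_seq_obj: "fraisse_seq P F f \<Longrightarrow> obj P (F n)"
  unfolding fraisse_seq_def by blast

lemma fraisse_seq_arrow: "fraisse_seq P F f \<Longrightarrow> n \<le> m \<Longrightarrow> arrow P (F m) (F n) (f m n)"
  unfolding fraisse_seq_def by blast

lemma fraisse_seq_id_fst: "fraisse_seq P F f \<Longrightarrow> u \<in> V (F n) \<Longrightarrow> fst (f n n) u = u"
  unfolding fraisse_seq_def arr_eq_def by auto

lemma fraisse_seq_id_snd: "fraisse_seq P F f \<Longrightarrow> u \<in> Ends (F n) \<Longrightarrow> snd (f n n) u = u"
  unfolding fraisse_seq_def arr_eq_def by auto

lemma fraisse_seq_comp_fst:
  "fraisse_seq P F f \<Longrightarrow> n \<le> m \<Longrightarrow> m \<le> k \<Longrightarrow> u \<in> V (F k)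
    \<Longrightarrow> fst (f m n) (fst (f k m) u) = fst (f k n) u"
  unfolding fraisse_seq_def arr_eq_def comp_arr_def by auto

lemma fraisse_seq_comp_snd:
  "fraisse_seq P F f \<Longrightarrow> n \<le> m \<Longrightarrow> m \<le> k \<Longrightarrow> y \<in> Ends (F n)
    \<Longrightarrow> snd (f k m) (snd (f m n) y) = snd (f k n) y"
  unfolding fraisse_seq_def arr_eq_def comp_arr_def by auto

lemma fraisse_seq_factor:
  assumes "fraisse_seq P F f" "arrow P B (F n) g"
  shows "\<exists>m\<ge>n. \<exists>h. arrow P (F m) B h \<and> arr_eq (F m) (F n) (comp_arr g h) (f m n)"
proof -
  have "\<forall>n B g. arrow P B (F n) g \<longrightarrow>
          (\<exists>m\<ge>n. \<exists>h. arrow P (F m) B h \<and> arr_eq (F m) (F n) (comp_arr g h) (f m n))"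
    using assms(1) unfolding fraisse_seq_def by (elim conjE) assumption
  then show ?thesis using assms(2) by blast
qed

lemma limF_proj: "x \<in> limF F f \<Longrightarrow> n \<le> m \<Longrightarrow> fst (f m n) (x m) = x n"
  unfolding limF_def by blast

lemma limF_in_V: "x \<in> limF F f \<Longrightarrow> x i \<in> V (F i)"
  unfolding limF_def by blast

lemma limF_eq_below: "x \<in> limF F f \<Longrightarrow> y \<in> limF F f \<Longrightarrow> j \<le> k \<Longrightarrow> x k = y k \<Longrightarrow> x j = y j"
  by (metis limF_proj)

lemma limF_eventually_neq:
  "x \<in> limF F f \<Longrightarrow> y \<in> limF F f \<Longrightarrow> x \<noteq> y \<Longrightarrow> \<exists>j. \<forall>k\<ge>j. x k \<noteq> y k"
  by (metis ext limF_eq_below)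

lemma limE_eventually_Ends:
  assumes "fraisse_seq P F f" "x \<in> limE F f"
  shows "\<exists>m. \<forall>k\<ge>m. x k \<in> Ends (F k)"
proof -
  obtain m y where "y \<in> Ends (F m)" "\<forall>k\<ge>m. x k = snd (f k m) y"
    using assms(2) unfolding limE_def by blast
  then show ?thesis using arrow_snd_in_Ends[OF fraisse_seq_arrow[OF assms(1)]] by metis
qed

text \<open>Fibres of the monotone map from level \<open>k\<close> to level \<open>K\<close> are subtrees of \<open>F k\<close>, and two
  disjoint subtrees are joined by at most one edge.\<close>

lemma limF_unique_neighbour_off_level:
  assumes fs: "fraisse_seq P F f" and x: "x \<in> limF F f" "x K \<in> Ends (F K)"
    and lim: "z \<in> limF F f" "z' \<in> limF F f" "w \<in> limF F f" "w' \<in> limF F f"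
    and z: "z K = x K" "z' K = x K" and w: "w K \<noteq> x K" "w' K \<noteq> x K"
    and edges: "limEd F w z" "limEd F w' z'"
  shows "w = w'"
proof -
  have fgK: "fgraph (F K)" using obj_fgraph[OF fraisse_seq_obj[OF fs]] .
  have "Ed (F K) (x K) (w K)" "Ed (F K) (x K) (w' K)"
    using edges z fgK unfolding limEd_def fgraph_def by metis+
  then have wK: "w K = w' K"
    by (rule Ends_neighbour_unique[OF fgK x(2) limF_in_V[OF lim(3)] limF_in_V[OF lim(4)] w])
  have "w k = w' k" if "K \<le> k" for k
  proof -
    let ?g = "fst (f k K)"
    define Z where "Z = {b \<in> V (F k). ?g b = x K}"
    define W where "W = {b \<in> V (F k). ?g b = w K}"
    have "monotone_map (F k) (F K) ?g"
      using fraisse_seq_arrow[OF fs that] unfolding arrow_def by blast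
    then have "conn_on (Ed (F k)) Z" "conn_on (Ed (F k)) W"
      using limF_in_V[OF x(1)] limF_in_V[OF lim(3)] unfolding monotone_map_def Z_def W_def by auto
    moreover have "ftree (F k)" using fraisse_seq_obj[OF fs] unfolding obj_def by blast
    moreover have "Z \<inter> W = {}" using w unfolding Z_def W_def by auto
    moreover have "z k \<in> Z" "z' k \<in> Z" "w k \<in> W" "w' k \<in> W"
      using lim[THEN limF_in_V] lim[THEN limF_proj, OF that] z wK unfolding Z_def W_def by auto
    moreover have "Ed (F k) (w k) (z k)" "Ed (F k) (w' k) (z' k)"
      using edges unfolding limEd_def by auto
    ultimately show ?thesis
      using ftree_unique_edge_between[of "F k" Z W] unfolding Z_def W_def by blast
  qed
  then show ?thesis
    using limF_eq_below[OF lim(3,4) _ wK] by (metis ext nle_le)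
qed

lemma topspace_limT: "topspace (limT F f) = limF F f"
  unfolding limT_def by (auto simp: limF_def PiE_iff)

lemma continuous_map_limT_proj: "continuous_map (limT F f) (discrete_topology (V (F K))) (\<lambda>x. x K)"
  unfolding limT_def
  by (rule continuous_map_from_subtopology) (rule continuous_map_product_projection, simp)

section \<open>Points of \<open>E\<close> are endpoints\<close>

lemma tg_connected_edge_into_clopen:
  assumes conn: "tg_connected T E" and t: "t \<in> A"
    and Xs: "closedin (subtopology T (topspace T - {t})) Xs"
    and Ys: "closedin (subtopology T (topspace T - {t})) Ys"
    and cover: "Xs \<union> Ys = topspace T - {t}" and disj: "Xs \<inter> Ys = {}"
    and no_edge: "\<forall>x\<in>Xs. \<forall>y\<in>Ys. \<not> E x y"
    and A: "openin T A" "closedin T A"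
    and c: "c \<in> Xs" "c \<notin> A"
  shows "\<exists>v u. v \<in> Xs \<and> v \<notin> A \<and> u \<in> A \<and> E v u"
proof (rule ccontr)
  txt \<open>Otherwise \<open>Xs - A\<close> is a nonempty proper clopen subset of \<open>T\<close> with no edge leaving it.\<close>
  assume no_edge_into_A: "\<not> ?thesis"
  obtain Xc where Xc: "closedin T Xc" "Xs = Xc \<inter> (topspace T - {t})"
    using Xs unfolding closedin_subtopology by blast
  obtain Yc where Yc: "closedin T Yc" "Ys = Yc \<inter> (topspace T - {t})"
    using Ys unfolding closedin_subtopology by blast
  have "t \<in> topspace T" using A(1) t openin_subset by blast
  define X where "X = Xs - A"
  define Y where "Y = topspace T - X"
  have X_Xc: "X = Xc \<inter> (topspace T - A)"
    unfolding X_def using Xc t by auto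
  have X_Yc: "X = topspace T - (Yc \<union> A)"
    unfolding X_def using Xc Yc cover disj t by auto
  have "closedin T X" unfolding X_Xc using Xc(1) A(1) by blast
  moreover have "closedin T Y" unfolding Y_def X_Yc using Yc(1) A(2)
    by (metis Diff_Diff_Int closedin_Un closedin_subset inf.absorb_iff2)
  moreover have "X \<noteq> {}" using c unfolding X_def by blast
  moreover have "Y \<noteq> {}" using \<open>t \<in> topspace T\<close> t unfolding Y_def X_def by blast
  moreover have "X \<inter> Y = {}" "X \<union> Y = topspace T" unfolding Y_def X_def using cover by auto
  moreover have "\<forall>x\<in>X. \<forall>y\<in>Y. \<not> E x y"
  proof (intro ballI)
    fix x y assume "x \<in> X" "y \<in> Y"
    show "\<not> E x y"
    proof (cases "y \<in> A")
      case True
      then show ?thesis using no_edge_into_A \<open>x \<in> X\<close> unfolding X_def by blast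
    next
      case False
      then have "y \<in> Ys" using \<open>y \<in> Y\<close> cover t unfolding Y_def X_def by auto
      then show ?thesis using no_edge \<open>x \<in> X\<close> unfolding X_def by blast
    qed
  qed
  ultimately show False
    using conn unfolding tg_connected_def by blast
qed

lemma not_arc_end_edges_into_clopen:
  assumes conn: "tg_connected T E" and gr: "tg_graph T E"
    and t: "t \<in> topspace T" "t \<notin> arc_ends T E"
  obtains Xs Ys where "Xs \<noteq> {}" "Ys \<noteq> {}" "Xs \<inter> Ys = {}" "Xs \<union> Ys = topspace T - {t}"
    "\<And>A. openin T A \<Longrightarrow> closedin T A \<Longrightarrow> t \<in> A \<Longrightarrow> \<not> Xs \<subseteq> A \<Longrightarrow> \<not> Ys \<subseteq> A \<Longrightarrow>
      \<exists>v1 u1 v2 u2. v1 \<in> Xs - A \<and> u1 \<in> A \<and> E v1 u1 \<and> v2 \<in> Ys - A \<and> u2 \<in> A \<and> E v2 u2"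
proof -
  have "\<not> tg_connected (subtopology T (topspace T - {t})) E"
    using t unfolding arc_ends_def by blast
  then obtain Xs Ys where
    Xs: "closedin (subtopology T (topspace T - {t})) Xs" and
    Ys: "closedin (subtopology T (topspace T - {t})) Ys" and
    nonempty: "Xs \<noteq> {}" "Ys \<noteq> {}" and disj: "Xs \<inter> Ys = {}" and
    cover: "Xs \<union> Ys = topspace T - {t}" and
    no_edge: "\<forall>x\<in>Xs. \<forall>y\<in>Ys. \<not> E x y"
    unfolding tg_connected_def by auto
  have no_edge': "\<forall>y\<in>Ys. \<forall>x\<in>Xs. \<not> E y x"
  proof (intro ballI notI)
    fix y x assume "y \<in> Ys" "x \<in> Xs" "E y x"
    then have "E x y"
      using gr cover unfolding tg_graph_def by blast
    then show False using no_edge \<open>y \<in> Ys\<close> \<open>x \<in> Xs\<close> by blast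
  qed
  show thesis
  proof (rule that[OF nonempty disj cover])
    fix A assume A: "openin T A" "closedin T A" "t \<in> A" "\<not> Xs \<subseteq> A" "\<not> Ys \<subseteq> A"
    obtain c1 c2 where "c1 \<in> Xs" "c1 \<notin> A" "c2 \<in> Ys" "c2 \<notin> A"
      using A(4,5) by blast
    obtain v1 u1 where "v1 \<in> Xs" "v1 \<notin> A" "u1 \<in> A" "E v1 u1"
      using tg_connected_edge_into_clopen[OF conn A(3) Xs Ys cover disj no_edge A(1,2)]
        \<open>c1 \<in> Xs\<close> \<open>c1 \<notin> A\<close> by blast
    moreover have "\<exists>v u. v \<in> Ys \<and> v \<notin> A \<and> u \<in> A \<and> E v u"
      using tg_connected_edge_into_clopen[OF conn A(3) Ys Xs _ _ no_edge' A(1,2) \<open>c2 \<in> Ys\<close> \<open>c2 \<notin> A\<close>]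
        cover disj by (simp add: Un_commute Int_commute)
    then obtain v2 u2 where "v2 \<in> Ys" "v2 \<notin> A" "u2 \<in> A" "E v2 u2"
      by blast
    ultimately show "\<exists>v1 u1 v2 u2. v1 \<in> Xs - A \<and> u1 \<in> A \<and> E v1 u1 \<and> v2 \<in> Ys - A \<and> u2 \<in> A \<and> E v2 u2"
      by blast
  qed
qed

lemma limE_separating_level:
  assumes fs: "fraisse_seq P F f" and x: "x \<in> limE F f"
    and y: "y1 \<in> limF F f" "y2 \<in> limF F f" "y1 \<noteq> x" "y2 \<noteq> x"
  obtains K where "x K \<in> Ends (F K)" "y1 K \<noteq> x K" "y2 K \<noteq> x K"
proof -
  have xF: "x \<in> limF F f" using x unfolding limE_def by blast
  obtain j1 where "\<forall>k\<ge>j1. y1 k \<noteq> x k"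
    using limF_eventually_neq[OF y(1) xF y(3)] by blast
  moreover obtain j2 where "\<forall>k\<ge>j2. y2 k \<noteq> x k"
    using limF_eventually_neq[OF y(2) xF y(4)] by blast
  moreover obtain m where "\<forall>k\<ge>m. x k \<in> Ends (F k)"
    using limE_eventually_Ends[OF fs x] by blast
  ultimately show thesis
    using that[of "max m (max j1 j2)"] by simp
qed

lemma limE_not_cut_point:
  assumes fs: "fraisse_seq P F f" and conn: "tg_connected T EH" and gr: "tg_graph T EH"
    and h_cont: "continuous_map T (limT F f) h" and h_inj: "inj_on h (topspace T)"
    and h_edge: "\<And>u v. u \<in> topspace T \<Longrightarrow> v \<in> topspace T \<Longrightarrow> EH u v \<Longrightarrow> limEd F (h u) (h v)"
    and t: "t \<in> topspace T" "h t \<in> limE F f"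
  shows "t \<in> arc_ends T EH"
proof (rule ccontr)
  assume "t \<notin> arc_ends T EH"
  then obtain Xs Ys where sides: "Xs \<noteq> {}" "Ys \<noteq> {}" "Xs \<inter> Ys = {}" "Xs \<union> Ys = topspace T - {t}"
    and edges_into: "\<And>A. openin T A \<Longrightarrow> closedin T A \<Longrightarrow> t \<in> A \<Longrightarrow> \<not> Xs \<subseteq> A \<Longrightarrow> \<not> Ys \<subseteq> A \<Longrightarrow>
      \<exists>v1 u1 v2 u2. v1 \<in> Xs - A \<and> u1 \<in> A \<and> EH v1 u1 \<and> v2 \<in> Ys - A \<and> u2 \<in> A \<and> EH v2 u2"
    using not_arc_end_edges_into_clopen[OF conn gr t(1)] by blast
  have hF: "h u \<in> limF F f" if "u \<in> topspace T" for u
    using continuous_map_image_subset_topspace[OF h_cont] topspace_limT that by blast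
  obtain c1 c2 where c: "c1 \<in> Xs" "c2 \<in> Ys" using sides(1,2) by blast
  then have cT: "c1 \<in> topspace T" "c1 \<noteq> t" "c2 \<in> topspace T" "c2 \<noteq> t" using sides(4) by auto
  then have "h c1 \<noteq> h t" "h c2 \<noteq> h t"
    using inj_on_contraD[OF h_inj cT(2) cT(1) t(1)] inj_on_contraD[OF h_inj cT(4) cT(3) t(1)] by auto
  then obtain K where K: "h t K \<in> Ends (F K)" "h c1 K \<noteq> h t K" "h c2 K \<noteq> h t K"
    using limE_separating_level[OF fs t(2) hF[OF cT(1)] hF[OF cT(3)]] by blast
  define A where "A = {u \<in> topspace T. h u K \<in> {h t K}}"
  have proj_cont: "continuous_map T (discrete_topology (V (F K))) (\<lambda>u. h u K)"
    using continuous_map_compose[OF h_cont continuous_map_limT_proj] by (simp add: o_def)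
  have "h t K \<in> V (F K)"
    using limF_in_V[OF hF[OF t(1)]] .
  have "openin T A"
    unfolding A_def by (rule openin_continuous_map_preimage[OF proj_cont]) (simp add: \<open>h t K \<in> V (F K)\<close>)
  moreover have "closedin T A"
    unfolding A_def by (rule closedin_continuous_map_preimage[OF proj_cont]) (simp add: \<open>h t K \<in> V (F K)\<close>)
  moreover have "t \<in> A" "\<not> Xs \<subseteq> A" "\<not> Ys \<subseteq> A"
    using t(1) c K unfolding A_def by auto
  ultimately obtain v1 u1 v2 u2 where vu: "v1 \<in> Xs - A" "u1 \<in> A" "EH v1 u1" "v2 \<in> Ys - A" "u2 \<in> A" "EH v2 u2"
    using edges_into by blast
  then have vuT: "v1 \<in> topspace T" "u1 \<in> topspace T" "v2 \<in> topspace T" "u2 \<in> topspace T"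
    using sides(4) unfolding A_def by auto
  have "h v1 = h v2"
  proof (rule limF_unique_neighbour_off_level[OF fs hF[OF t(1)] K(1)])
    show "h u1 \<in> limF F f" "h u2 \<in> limF F f" "h v1 \<in> limF F f" "h v2 \<in> limF F f"
      using vuT hF by auto
    show "h u1 K = h t K" "h u2 K = h t K" "h v1 K \<noteq> h t K" "h v2 K \<noteq> h t K"
      using vu vuT unfolding A_def by auto
    show "limEd F (h v1) (h u1)" "limEd F (h v2) (h u2)"
      using h_edge vuT vu by auto
  qed
  then have "v1 = v2" using h_inj vuT by (meson inj_onD)
  then show False using vu sides(3) by blast
qed

lemma limE_tg_endpoint:
  assumes fs: "fraisse_seq P F f" and x: "x \<in> limE F f"
  shows "tg_endpoint TYPE('h) (limT F f) (limEd F) x"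
  unfolding tg_endpoint_def
proof (intro conjI allI impI)
  show "x \<in> topspace (limT F f)" using x unfolding limE_def by (simp add: topspace_limT)
  fix T :: "'h topology" and EH h
  assume "is_arc T EH \<and> embedding_map T (limT F f) h \<and>
        (\<forall>u\<in>topspace T. \<forall>v\<in>topspace T. EH u v = limEd F (h u) (h v)) \<and> x \<in> h ` topspace T"
  then have arc: "is_arc T EH" and emb: "embedding_map T (limT F f) h"
    and h_edge: "\<forall>u\<in>topspace T. \<forall>v\<in>topspace T. EH u v = limEd F (h u) (h v)"
    and "x \<in> h ` topspace T"
    by auto
  then obtain t where t: "t \<in> topspace T" "x = h t" by blast
  have h_cont: "continuous_map T (limT F f) h"
    using emb continuous_map_in_subtopology embedding_map_def homeomorphic_imp_continuous_map by blast
  have h_inj: "inj_on h (topspace T)"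
    using emb embedding_map_def homeomorphic_imp_injective_map by blast
  have "t \<in> arc_ends T EH"
  proof (rule limE_not_cut_point[OF fs _ _ h_cont h_inj _ t(1)])
    show "tg_connected T EH" "tg_graph T EH" using arc unfolding is_arc_def by auto
    show "limEd F (h u) (h v)" if "u \<in> topspace T" "v \<in> topspace T" "EH u v" for u v
      using h_edge that by blast
    show "h t \<in> limE F f" using t x by simp
  qed
  then show "x \<in> h ` arc_ends T EH" using t by blast
qed

section \<open>Splitting an edge at a ramification point\<close>

text \<open>The tree \<open>B\<close> arises from \<open>A\<close> by subdividing the edge \<open>a a1\<close> with a new vertex \<open>w\<close>
  and hanging a new endpoint \<open>z\<close> on \<open>w\<close>; \<open>w\<close> carries the label of \<open>a\<close>, and collapsing
  \<open>{a, w, z}\<close> to \<open>a\<close> is an arrow \<open>B \<rightarrow> A\<close> with an endpoint over \<open>a\<close>. The order of \<open>a\<close> is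
  unchanged, which keeps the label constraint at \<open>a\<close>.\<close>

locale edge_split =
  fixes P :: "enat set" and A :: tobj and a a1 w z :: nat
  assumes objA: "obj P A" and P_ge_3: "\<forall>p\<in>P. 3 \<le> p" and a_ram: "a \<in> ram A"
    and a1: "a1 \<in> V A" "a1 \<noteq> a" "Ed A a a1"
    and fresh: "w \<notin> V A" "z \<notin> V A" "w \<noteq> z"
begin

definition EdB :: "nat \<Rightarrow> nat \<Rightarrow> bool" where
  "EdB u v \<longleftrightarrow> (Ed A u v \<and> \<not> (u = a \<and> v = a1) \<and> \<not> (u = a1 \<and> v = a)) \<or> (u = v \<and> (u = w \<or> u = z))
     \<or> (u = a \<and> v = w) \<or> (u = w \<and> v = a) \<or> (u = a1 \<and> v = w) \<or> (u = w \<and> v = a1)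
     \<or> (u = w \<and> v = z) \<or> (u = z \<and> v = w)"

definition B :: tobj where
  "B = \<lparr>V = insert w (insert z (V A)), Ed = EdB, lab = (lab A)(w := lab A a, z := None)\<rparr>"

definition collapse :: "nat \<Rightarrow> nat \<Rightarrow> nat" where
  "collapse t u = (if u = w \<or> u = z then t else u)"

lemma fgraph_A: "fgraph A" using objA by (rule obj_fgraph)

lemma finite_A: "finite (V A)" using fgraph_A unfolding fgraph_def by blast
lemma Ed_A_in_V: "Ed A u v \<Longrightarrow> u \<in> V A \<and> v \<in> V A" using fgraph_A unfolding fgraph_def by blast
lemma Ed_A_refl: "u \<in> V A \<Longrightarrow> Ed A u u" using fgraph_A unfolding fgraph_def by blast
lemma Ed_A_sym: "Ed A u v \<Longrightarrow> Ed A v u" using fgraph_A unfolding fgraph_def by blast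

lemma a_in_V: "a \<in> V A" using a_ram unfolding ram_def by blast
lemma new_vertices_distinct: "a \<noteq> w" "a \<noteq> z" "a1 \<noteq> w" "a1 \<noteq> z"
  using a_in_V a1(1) fresh by auto

lemma V_B: "V B = insert w (insert z (V A))" unfolding B_def by simp
lemma Ed_B: "Ed B = EdB" unfolding B_def by simp
lemma lab_B: "lab B = (lab A)(w := lab A a, z := None)" unfolding B_def by simp

lemma EdB_in_V: "EdB u v \<Longrightarrow> u \<in> V B \<and> v \<in> V B"
  unfolding EdB_def V_B using Ed_A_in_V a_in_V a1(1) by auto

lemma EdB_sym: "EdB u v \<Longrightarrow> EdB v u"
  unfolding EdB_def using Ed_A_sym by auto

lemma EdB_refl: "u \<in> V B \<Longrightarrow> EdB u u"
  unfolding EdB_def V_B using Ed_A_refl a1(2) by auto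

lemma EdB_imp_Ed_A: "u \<in> V A \<Longrightarrow> v \<in> V A \<Longrightarrow> EdB u v \<Longrightarrow> Ed A u v"
  unfolding EdB_def using fresh by auto

lemma Ed_A_imp_EdB: "Ed A u v \<Longrightarrow> \<not> (u = a \<and> v = a1) \<Longrightarrow> \<not> (u = a1 \<and> v = a) \<Longrightarrow> EdB u v"
  unfolding EdB_def by auto

lemma EdB_z_iff: "EdB z v \<longleftrightarrow> v = z \<or> v = w"
  unfolding EdB_def using Ed_A_in_V fresh new_vertices_distinct by auto

lemma EdB_w_iff: "EdB w v \<longleftrightarrow> v = w \<or> v = a \<or> v = a1 \<or> v = z"
  unfolding EdB_def using Ed_A_in_V fresh new_vertices_distinct by auto

lemma not_EdB_a_a1: "\<not> EdB a a1" "\<not> EdB a1 a"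
  unfolding EdB_def using a1(2) new_vertices_distinct by auto

lemma fgraph_B: "fgraph B"
  unfolding fgraph_def Ed_B
  using finite_A EdB_in_V EdB_refl EdB_sym by (auto simp: V_B)

lemma ord_B_eq_ord_A: "c \<in> V A \<Longrightarrow> ord B c = ord A c"
proof -
  assume c: "c \<in> V A"
  let ?N = "{b \<in> V A. b \<noteq> c \<and> Ed A c b}"
  have N_fin: "finite ?N" using finite_A by simp
  consider "c = a" | "c = a1" | "c \<noteq> a" "c \<noteq> a1" by blast
  then show ?thesis
  proof cases
    case 1
    then have "{b \<in> V B. b \<noteq> c \<and> EdB c b} = insert w (?N - {a1})"
      unfolding V_B EdB_def using Ed_A_in_V fresh new_vertices_distinct a1(2) by auto
    moreover have "a1 \<in> ?N" using 1 a1 by simp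
    ultimately show ?thesis
      unfolding ord_def Ed_B using card_insert_Diff_swap[OF N_fin] fresh(1) by simp
  next
    case 2
    then have "{b \<in> V B. b \<noteq> c \<and> EdB c b} = insert w (?N - {a})"
      unfolding V_B EdB_def using Ed_A_in_V fresh new_vertices_distinct a1(2) by auto
    moreover have "a \<in> ?N" using 2 a1 a_in_V Ed_A_sym by auto
    ultimately show ?thesis
      unfolding ord_def Ed_B using card_insert_Diff_swap[OF N_fin] fresh(1) by simp
  next
    case 3
    then have "{b \<in> V B. b \<noteq> c \<and> EdB c b} = ?N"
      unfolding V_B EdB_def using c Ed_A_in_V fresh by auto
    then show ?thesis unfolding ord_def Ed_B by simp
  qed
qed

lemma ord_B_w: "ord B w = 3"
proof -
  have "{b \<in> V B. b \<noteq> w \<and> EdB w b} = {a, a1, z}"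
    unfolding V_B using EdB_w_iff a_in_V a1(1) fresh(3) new_vertices_distinct by auto
  then show ?thesis
    unfolding ord_def Ed_B using new_vertices_distinct a1(2) by (simp add: numeral_3_eq_3)
qed

lemma ord_B_z: "ord B z = 1"
proof -
  have "{b \<in> V B. b \<noteq> z \<and> EdB z b} = {w}"
    unfolding V_B using EdB_z_iff fresh(3) by auto
  then show ?thesis unfolding ord_def Ed_B by simp
qed

lemma conn_on_B: "conn_on (Ed B) (V B)"
proof -
  have w_side: False
    if "X \<inter> Y = {}" "X \<union> Y = V B" "Y \<noteq> {}" "w \<in> X" "\<forall>x\<in>X. \<forall>y\<in>Y. \<not> EdB x y" for X Y
  proof -
    have "EdB w a" "EdB w a1" "EdB w z" using EdB_w_iff by auto
    then have "a \<in> X" "a1 \<in> X" "z \<in> X"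
      using that(2,4,5) a_in_V a1(1) unfolding V_B by blast+
    then have "Y \<subseteq> V A" using that(1,2,4) unfolding V_B by blast
    have "\<not> Ed A x y" if "x \<in> X \<inter> V A" "y \<in> Y" for x y
      using Ed_A_imp_EdB \<open>a \<in> X\<close> \<open>a1 \<in> X\<close> \<open>X \<inter> Y = {}\<close> \<open>\<forall>x\<in>X. \<forall>y\<in>Y. \<not> EdB x y\<close> that by blast
    moreover have "X \<inter> V A \<noteq> {}" using \<open>a \<in> X\<close> a_in_V by blast
    moreover have "X \<inter> V A \<inter> Y = {}" "X \<inter> V A \<union> Y = V A"
      using that(1,2) \<open>Y \<subseteq> V A\<close> unfolding V_B by auto
    moreover have "conn_on (Ed A) (V A)" using objA unfolding obj_def ftree_def by blast
    ultimately show False using conn_onD \<open>Y \<noteq> {}\<close> by metis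
  qed
  show ?thesis
    unfolding conn_on_def Ed_B
  proof
    assume "\<exists>X Y. X \<noteq> {} \<and> Y \<noteq> {} \<and> X \<inter> Y = {} \<and> X \<union> Y = V B \<and> (\<forall>x\<in>X. \<forall>y\<in>Y. \<not> EdB x y)"
    then obtain X Y where H: "X \<noteq> {}" "Y \<noteq> {}" "X \<inter> Y = {}" "X \<union> Y = V B" "\<forall>x\<in>X. \<forall>y\<in>Y. \<not> EdB x y"
      by blast
    have "w \<in> X \<or> w \<in> Y" using H(4) unfolding V_B by blast
    then show False
    proof
      assume "w \<in> X"
      then show False using w_side[OF H(3,4,2) _ H(5)] by blast
    next
      assume "w \<in> Y"
      moreover have "\<forall>x\<in>Y. \<forall>y\<in>X. \<not> EdB x y" using H(5) EdB_sym by blast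
      ultimately show False using w_side[of Y X] H(1,3,4) by blast
    qed
  qed
qed

lemma path_avoiding_w_in_A:
  assumes "successively EdB ys" "distinct ys" "2 \<le> length ys" "set ys \<subseteq> V B" "w \<notin> set ys"
  shows "set ys \<subseteq> V A \<and> successively (Ed A) ys"
proof -
  have "z \<notin> set ys"
  proof
    assume "z \<in> set ys"
    then obtain u where "u \<in> set ys" "u \<noteq> z" "EdB z u \<or> EdB u z"
      using successively_distinct_neighbour[OF assms(1-3)] by blast
    then show False using EdB_z_iff EdB_sym assms(5) by blast
  qed
  then have "set ys \<subseteq> V A" using assms(4,5) unfolding V_B by blast
  moreover have "successively (Ed A) ys"
    using successively_mono[OF assms(1)] EdB_imp_Ed_A calculation by blast
  ultimately show ?thesis ..
qed

lemma cycle_through_w_has_cycle_A: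
  assumes rot: "successively EdB (w # ys)" "EdB (last (w # ys)) w"
    and ys: "distinct ys" "w \<notin> set ys" "2 \<le> length ys" "set ys \<subseteq> V B"
  shows "has_cycle A"
proof -
  txt \<open>Removing \<open>w\<close> leaves a path between \<open>a\<close> and \<open>a1\<close>, which the edge \<open>a a1\<close> of \<open>A\<close>
    closes up.\<close>
  have "ys \<noteq> []" using ys(3) by auto
  have "successively EdB ys" using rot(1) by (auto simp: successively_Cons)
  then have ys_A: "set ys \<subseteq> V A" "successively (Ed A) ys"
    using path_avoiding_w_in_A ys by auto
  have "EdB w (hd ys)" "EdB w (last ys)"
    using rot \<open>ys \<noteq> []\<close> EdB_sym by (auto simp: successively_Cons)
  moreover have "hd ys \<in> V A" "last ys \<in> V A"
    using ys_A(1) \<open>ys \<noteq> []\<close> by auto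
  ultimately have ends: "hd ys \<in> {a, a1}" "last ys \<in> {a, a1}"
    using EdB_w_iff[of "hd ys"] EdB_w_iff[of "last ys"] fresh by auto
  have "hd ys \<noteq> last ys"
    using ys(1,3) by (cases ys) (auto simp: last_conv_nth)
  then have "Ed A (last ys) (hd ys)" using ends a1(3) Ed_A_sym by auto
  moreover have "length ys \<noteq> 2"
  proof
    assume "length ys = 2"
    then obtain p q where "ys = [p, q]" by (cases ys; cases "tl ys") auto
    then show False
      using \<open>successively EdB ys\<close> ends \<open>hd ys \<noteq> last ys\<close> not_EdB_a_a1 by auto
  qed
  ultimately show ?thesis
    using ys ys_A unfolding has_cycle_iff_successively by auto
qed

lemma not_has_cycle_B: "\<not> has_cycle B"
proof
  assume "has_cycle B"
  then obtain xs where xs: "distinct xs" "3 \<le> length xs" "set xs \<subseteq> V B" "successively EdB xs"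
    "EdB (last xs) (hd xs)"
    unfolding has_cycle_iff_successively Ed_B by blast
  have "\<not> has_cycle A" using objA unfolding obj_def ftree_def by blast
  show False
  proof (cases "w \<in> set xs")
    case False
    then have "set xs \<subseteq> V A" "successively (Ed A) xs"
      using path_avoiding_w_in_A xs by auto
    moreover have "Ed A (last xs) (hd xs)"
      using xs(2,5) EdB_imp_Ed_A calculation(1) by (metis hd_in_set last_in_set list.size(3) not_numeral_le_zero subsetD)
    ultimately show False
      using \<open>\<not> has_cycle A\<close> xs(1,2) unfolding has_cycle_iff_successively by blast
  next
    case True
    then obtain us vs where "xs = us @ w # vs" by (meson split_list)
    then have "successively EdB (w # vs @ us)" "EdB (last (w # vs @ us)) w"
      using cycle_rotate[of EdB us w vs] xs(4,5) by simp_all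
    moreover have "distinct (vs @ us)" "w \<notin> set (vs @ us)" "2 \<le> length (vs @ us)"
      "set (vs @ us) \<subseteq> V B"
      using xs(1-3) \<open>xs = us @ w # vs\<close> by auto
    ultimately have "has_cycle A"
      by (rule cycle_through_w_has_cycle_A)
    then show False using \<open>\<not> has_cycle A\<close> by blast
  qed
qed

lemma obj_B: "obj P B"
  unfolding obj_def
proof (intro conjI ballI)
  have ram_iff: "c \<in> ram B \<longleftrightarrow> c \<in> ram A" and Ends_iff: "c \<in> Ends B \<longleftrightarrow> c \<in> Ends A"
    and lab_eq: "lab B c = lab A c" if "c \<in> V A" for c
    using that ord_B_eq_ord_A fresh unfolding ram_def Ends_def V_B lab_B by auto
  have w_ram: "w \<in> ram B" and z_Ends: "z \<in> Ends B" and "w \<notin> Ends B" "z \<notin> ram B"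
    using ord_B_w ord_B_z unfolding ram_def Ends_def V_B by auto
  show "ftree B" unfolding ftree_def using fgraph_B conn_on_B not_has_cycle_B V_B by auto
  show "ram B \<noteq> {}" using w_ram by blast
  show "c \<in> Ends B \<or> c \<in> ram B" if "c \<in> V B" for c
    using that objA ram_iff Ends_iff w_ram z_Ends unfolding obj_def V_B by auto
  show "\<exists>p\<in>P. lab B c = Some p \<and> enat (ord B c) \<le> p" if "c \<in> ram B" for c
  proof (cases "c \<in> V A")
    case True
    then show ?thesis using that objA ram_iff lab_eq ord_B_eq_ord_A unfolding obj_def by auto
  next
    case False
    then have "c = w" using that \<open>z \<notin> ram B\<close> unfolding ram_def V_B by auto
    obtain p where "p \<in> P" "lab A a = Some p" using objA a_ram unfolding obj_def by blast
    then show ?thesis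
      using P_ge_3 \<open>c = w\<close> ord_B_w fresh(3) by (auto simp: lab_B numeral_eq_enat)
  qed
  show "lab B c = None" if "c \<in> Ends B" for c
  proof (cases "c \<in> V A")
    case True
    then show ?thesis using that objA Ends_iff lab_eq unfolding obj_def by auto
  next
    case False
    then have "c = z" using that \<open>w \<notin> Ends B\<close> unfolding Ends_def V_B by auto
    then show ?thesis using fresh(3) by (simp add: lab_B)
  qed
qed

lemma collapse_V_A: "u \<in> V A \<Longrightarrow> collapse t u = u"
  unfolding collapse_def using fresh by auto

lemma fibre_collapse:
  "t \<in> V A \<Longrightarrow> c \<in> V A \<Longrightarrow> {u \<in> V B. collapse t u = c} = (if c = t then {t, w, z} else {c})"
  unfolding V_B collapse_def using fresh by auto

lemma collapse_image: "t \<in> V A \<Longrightarrow> collapse t ` V B = V A"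
proof
  show "t \<in> V A \<Longrightarrow> collapse t ` V B \<subseteq> V A" unfolding V_B collapse_def by auto
  show "V A \<subseteq> collapse t ` V B"
  proof
    fix c assume "c \<in> V A"
    then show "c \<in> collapse t ` V B"
      using collapse_V_A[of c t] unfolding V_B by (metis image_eqI insertCI)
  qed
qed

lemma collapse_edge:
  assumes t: "t = a \<or> t = a1" and uv: "u \<in> V B" "v \<in> V B" "EdB u v"
  shows "Ed A (collapse t u) (collapse t v)"
proof -
  have new_edge: "Ed A (collapse t x) (collapse t y)" if "EdB x y" "x = w \<or> x = z" for x y
  proof -
    have "collapse t x = t" using that(2) unfolding collapse_def by simp
    moreover have "y = w \<or> y = z \<or> y = a \<or> y = a1"
      using that EdB_w_iff EdB_z_iff by blast
    then have "collapse t y \<in> {t, a, a1}"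
      unfolding collapse_def using new_vertices_distinct by auto
    ultimately show ?thesis using t Ed_A_refl a_in_V a1 Ed_A_sym by auto
  qed
  consider "u = w \<or> u = z" | "v = w \<or> v = z" | "u \<in> V A" "v \<in> V A"
    using uv(1,2) unfolding V_B by blast
  then show ?thesis
  proof cases
    case 1
    then show ?thesis using new_edge uv(3) by blast
  next
    case 2
    then show ?thesis using new_edge EdB_sym uv(3) Ed_A_sym by blast
  next
    case 3
    then show ?thesis using uv(3) EdB_imp_Ed_A collapse_V_A by simp
  qed
qed

lemma collapse_lift_edge:
  assumes t: "t = a \<or> t = a1" and pq: "p \<in> V A" "q \<in> V A" "Ed A p q"
  shows "\<exists>u\<in>V B. \<exists>v\<in>V B. collapse t u = p \<and> collapse t v = q \<and> EdB u v"
proof (cases "(p = a \<and> q = a1) \<or> (p = a1 \<and> q = a)")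
  case True
  txt \<open>The edge \<open>a a1\<close> of \<open>A\<close> is covered by the edge between \<open>w\<close> and the end other than \<open>t\<close>.\<close>
  define u where "u = (if p = t then w else p)"
  define v where "v = (if q = t then w else q)"
  have "collapse t u = p" "collapse t v = q"
    unfolding u_def v_def using pq(1,2) fresh by (auto simp: collapse_def)
  moreover have "EdB u v"
    unfolding u_def v_def using True t a1(2) EdB_w_iff[of a] EdB_w_iff[of a1] EdB_sym by auto
  moreover have "u \<in> V B" "v \<in> V B"
    unfolding u_def v_def V_B using pq by auto
  ultimately show ?thesis by blast
next
  case False
  then have "EdB p q" using Ed_A_imp_EdB pq(3) by blast
  then show ?thesis using pq collapse_V_A unfolding V_B by blast
qed

lemma monotone_epi_on_collapse:
  assumes t: "t = a \<or> t = a1"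
  shows "monotone_epi_on (Ed B) (V B) (Ed A) (V A) (collapse t)"
  unfolding monotone_epi_on_def Ed_B
proof (intro conjI ballI impI)
  have t_V: "t \<in> V A" using t a_in_V a1(1) by auto
  show "collapse t ` V B = V A" using collapse_image[OF t_V] .
  show "Ed A (collapse t u) (collapse t v)" if "u \<in> V B" "v \<in> V B" "EdB u v" for u v
    using collapse_edge[OF t that] .
  show "\<exists>u\<in>V B. \<exists>v\<in>V B. collapse t u = p \<and> collapse t v = q \<and> EdB u v"
    if "p \<in> V A" "q \<in> V A" "Ed A p q" for p q
    using collapse_lift_edge[OF t that] .
  have "EdB t w" "EdB w t" "EdB w z" "EdB z w"
    using t EdB_w_iff EdB_sym by blast+
  then show "conn_on EdB {u \<in> V B. collapse t u = q}" if "q \<in> V A" for q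
    using fibre_collapse[OF t_V that] conn_on_path3[of EdB t w z] by (simp add: conn_on_singleton)
qed

lemma wc_witness_self:
  assumes c: "c \<in> ram A"
  shows "wc_witness B A (collapse a) c c"
proof -
  have c_V: "c \<in> V A" using c unfolding ram_def by blast
  txt \<open>Collapse \<open>{w, z}\<close> onto a neighbour \<open>t \<noteq> c\<close> instead; the components of \<open>A - c\<close> pull
    back along this map to components of \<open>B - c\<close>.\<close>
  define t where "t = (if c = a then a1 else a)"
  have t: "t = a \<or> t = a1" "t \<noteq> c" "t \<in> V A" unfolding t_def using a_in_V a1 by auto
  have "{u \<in> V B. collapse t u \<noteq> c} = V B - {c}"
    using t(2) c_V collapse_V_A fresh unfolding V_B by (auto simp: collapse_def)
  then have r: "monotone_epi_on (Ed B) (V B - {c}) (Ed A) (V A - {c}) (collapse t)"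
    using monotone_epi_on_remove_fibre[OF monotone_epi_on_collapse[OF t(1)]] by metis
  define \<pi> where "\<pi> C = {u \<in> V B - {c}. collapse t u \<in> C}" for C
  have comp: "\<pi> C \<in> comps_minus B c" if "C \<in> comps_minus A c" for C
    using components_vimage[OF r] that unfolding \<pi>_def comps_minus_def by blast
  have C_sub: "C \<subseteq> V A - {c}" if "C \<in> comps_minus A c" for C
    using that unfolding comps_minus_def components_def by blast
  have sub: "{x \<in> V B. collapse a x \<in> C} \<subseteq> \<pi> C" if "C \<in> comps_minus A c" for C
  proof
    fix x assume x: "x \<in> {x \<in> V B. collapse a x \<in> C}"
    then have "collapse a x \<noteq> c" using C_sub[OF that] by blast
    then have "x \<noteq> c" "collapse t x = collapse a x"
      using c_V collapse_V_A unfolding t_def collapse_def by auto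
    then show "x \<in> \<pi> C" unfolding \<pi>_def using x by simp
  qed
  have "inj_on \<pi> (comps_minus A c)"
  proof (rule inj_onI)
    fix C1 C2 assume C: "C1 \<in> comps_minus A c" "C2 \<in> comps_minus A c" and "\<pi> C1 = \<pi> C2"
    have "C1 = {q \<in> V A - {c}. q \<in> \<pi> C1}" "C2 = {q \<in> V A - {c}. q \<in> \<pi> C2}"
      using C_sub[OF C(1)] C_sub[OF C(2)] collapse_V_A unfolding \<pi>_def V_B by auto
    then show "C1 = C2" using \<open>\<pi> C1 = \<pi> C2\<close> by simp
  qed
  moreover have "c \<in> V B" "collapse a c = c" "ord B c \<ge> ord A c"
    using c_V collapse_V_A ord_B_eq_ord_A unfolding V_B by auto
  ultimately show ?thesis
    unfolding wc_witness_def using comp sub by blast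
qed

lemma arrow_collapse: "arrow P B A (collapse a, id)"
  unfolding arrow_def fst_conv snd_conv
proof (intro conjI ballI allI impI)
  show "obj P B" by (rule obj_B)
  show "obj P A" by (rule objA)
  show "epi B A (collapse a)" "monotone_map B A (collapse a)"
    using epi_monotone_mapI[OF monotone_epi_on_collapse] by blast+
  show "weakly_coherent B A (collapse a)"
    unfolding weakly_coherent_def using wc_witness_self by blast
  show "lab B b = lab A c" if "c \<in> ram A" "wc_witness B A (collapse a) c b" for c b
  proof -
    have b: "b \<in> V B" "collapse a b = c" "ord B b \<ge> ord A c"
      using that(2) unfolding wc_witness_def by auto
    moreover have "ord A c \<ge> 3" using that(1) unfolding ram_def by blast
    ultimately have "b \<noteq> z" using ord_B_z by auto
    then show ?thesis
      using b fresh collapse_V_A unfolding V_B by (auto simp: lab_B collapse_def)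
  qed
  show "id y \<in> Ends B" "collapse a (id y) = y" if "y \<in> Ends A" for y
    using that ord_B_eq_ord_A collapse_V_A unfolding Ends_def V_B by auto
qed

lemma z_in_Ends_B: "z \<in> Ends B"
  using ord_B_z unfolding Ends_def V_B by simp

lemma collapse_z: "collapse a z = a"
  unfolding collapse_def by simp

end

lemma ram_split_arrow:
  assumes objA: "obj P A" and P_ge_3: "\<forall>p\<in>P. 3 \<le> p" and a: "a \<in> ram A"
  shows "\<exists>B g. arrow P B A g \<and> (\<exists>z\<in>Ends B. fst g z = a)"
proof -
  have "finite (V A)" using obj_fgraph[OF objA] unfolding fgraph_def by blast
  have "ord A a \<ge> 3" using a unfolding ram_def by blast
  then have "card {b \<in> V A. b \<noteq> a \<and> Ed A a b} \<noteq> 0" unfolding ord_def by simp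
  then obtain a1 where a1: "a1 \<in> V A" "a1 \<noteq> a" "Ed A a a1"
    by (metis (mono_tags, lifting) card.empty empty_Collect_eq)
  define w where "w = Suc (Max (V A))"
  define z where "z = Suc (Suc (Max (V A)))"
  have "w \<notin> V A"
    unfolding w_def using Max_ge[OF \<open>finite (V A)\<close>] by (metis Suc_n_not_le_n)
  moreover have "z \<notin> V A"
    unfolding z_def using Max_ge[OF \<open>finite (V A)\<close>] by (metis Suc_n_not_le_n le_Suc_eq)
  moreover have "w \<noteq> z"
    unfolding w_def z_def by simp
  ultimately interpret edge_split P A a a1 w z
    using objA P_ge_3 a a1 by unfold_locales auto
  show ?thesis using arrow_collapse z_in_Ends_B collapse_z by fastforce
qed

section \<open>Density of \<open>E\<close>\<close>

lemma fraisse_seq_end_above: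
  assumes fs: "fraisse_seq P F f" and P_ge_3: "\<forall>p\<in>P. 3 \<le> p" and a: "a \<in> V (F n)"
  shows "\<exists>m\<ge>n. \<exists>y\<in>Ends (F m). fst (f m n) y = a"
proof -
  have "a \<in> Ends (F n) \<or> a \<in> ram (F n)"
    using fraisse_seq_obj[OF fs] a unfolding obj_def by blast
  then show ?thesis
  proof
    assume "a \<in> Ends (F n)"
    then show ?thesis using fraisse_seq_id_fst[OF fs a] by blast
  next
    assume "a \<in> ram (F n)"
    then obtain B g z where g: "arrow P B (F n) g" and z: "z \<in> Ends B" "fst g z = a"
      using ram_split_arrow[OF fraisse_seq_obj[OF fs] P_ge_3] by blast
    then obtain m h where "m \<ge> n" and h: "arrow P (F m) B h"
      and factor: "arr_eq (F m) (F n) (comp_arr g h) (f m n)"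
      using fraisse_seq_factor[OF fs] by blast
    have y: "snd h z \<in> Ends (F m)" "fst h (snd h z) = z"
      using arrow_snd_in_Ends[OF h z(1)] by auto
    moreover have "snd h z \<in> V (F m)" using y(1) Ends_subset_V by blast
    ultimately have "fst (f m n) (snd h z) = fst g (fst h (snd h z))"
      using factor unfolding arr_eq_def comp_arr_def by auto
    then show ?thesis using \<open>m \<ge> n\<close> y z(2) by auto
  qed
qed

lemma limE_through_end:
  assumes fs: "fraisse_seq P F f" and y: "y \<in> Ends (F m)"
  shows "\<exists>e\<in>limE F f. e m = y"
proof -
  define e where "e k = (if m \<le> k then snd (f k m) y else fst (f m k) y)" for k
  have y_V: "y \<in> V (F m)" using y Ends_subset_V by blast
  have up: "snd (f k m) y \<in> Ends (F k) \<and> fst (f k m) (snd (f k m) y) = y" if "m \<le> k" for k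
    using arrow_snd_in_Ends[OF fraisse_seq_arrow[OF fs that] y] .
  have e_V: "e k \<in> V (F k)" for k
    unfolding e_def using up Ends_subset_V arrow_fst_in_V[OF fraisse_seq_arrow[OF fs] y_V] by auto
  have e_proj: "fst (f k j) (e k) = e j" if "j \<le> k" for j k
  proof (cases "m \<le> j")
    case True
    have "snd (f k j) (snd (f j m) y) = snd (f k m) y"
      using fraisse_seq_comp_snd[OF fs True that y] .
    moreover have "fst (f k j) (snd (f k j) (snd (f j m) y)) = snd (f j m) y"
      using arrow_snd_in_Ends[OF fraisse_seq_arrow[OF fs that]] up[OF True] by blast
    ultimately show ?thesis unfolding e_def using True that by simp
  next
    case False
    show ?thesis
    proof (cases "m \<le> k")
      case True
      have "snd (f k m) y \<in> V (F k)" using up[OF True] Ends_subset_V by blast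
      then have "fst (f m j) (fst (f k m) (snd (f k m) y)) = fst (f k j) (snd (f k m) y)"
        using fraisse_seq_comp_fst[OF fs _ True] \<open>\<not> m \<le> j\<close> by simp
      then show ?thesis unfolding e_def using True False up[OF True] by simp
    next
      case False
      then show ?thesis
        unfolding e_def using fraisse_seq_comp_fst[OF fs that _ y_V] \<open>\<not> m \<le> j\<close> by simp
    qed
  qed
  have "e \<in> limE F f"
    unfolding limE_def limF_def using e_V e_proj y unfolding e_def by auto
  moreover have "e m = y"
    unfolding e_def using fraisse_seq_id_snd[OF fs y] by simp
  ultimately show ?thesis by blast
qed

lemma limE_dense:
  assumes fs: "fraisse_seq P F f" and P_ge_3: "\<forall>p\<in>P. 3 \<le> p"
  shows "(limT F f) closure_of (limE F f) = limF F f"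
proof
  show "limT F f closure_of limE F f \<subseteq> limF F f"
    using closure_of_subset_topspace topspace_limT by metis
  show "limF F f \<subseteq> limT F f closure_of limE F f"
  proof
    fix x assume x: "x \<in> limF F f"
    show "x \<in> limT F f closure_of limE F f"
      unfolding in_closure_of
    proof (intro conjI allI impI)
      show "x \<in> topspace (limT F f)" using x topspace_limT by simp
      fix U assume "x \<in> U \<and> openin (limT F f) U"
      then obtain U' where "x \<in> U'" "U = U' \<inter> limF F f"
        and "openin (product_topology (\<lambda>i. discrete_topology (V (F i))) UNIV) U'"
        unfolding limT_def openin_subtopology by blast
      then obtain W where W: "finite {i. W i \<noteq> V (F i)}" "x \<in> Pi\<^sub>E UNIV W" "Pi\<^sub>E UNIV W \<subseteq> U'"
        unfolding openin_product_topology_alt by auto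
      txt \<open>A basic neighbourhood only constrains finitely many levels, all below some \<open>n\<close>; an
        endpoint of a later level lying over \<open>x n\<close> gives a point of \<open>E\<close> agreeing with \<open>x\<close> there.\<close>
      obtain n where n: "\<forall>i\<in>{i. W i \<noteq> V (F i)}. i \<le> n"
        using W(1) finite_nat_set_iff_bounded_le by blast
      obtain m y where "m \<ge> n" "y \<in> Ends (F m)" "fst (f m n) y = x n"
        using fraisse_seq_end_above[OF fs P_ge_3 limF_in_V[OF x]] by blast
      then obtain e where e: "e \<in> limE F f" "e m = y"
        using limE_through_end[OF fs] by blast
      then have eF: "e \<in> limF F f" unfolding limE_def by blast
      have "e n = x n"
        using limF_proj[OF eF \<open>m \<ge> n\<close>] e(2) \<open>fst (f m n) y = x n\<close> by simp
      then have "e i \<in> W i" for i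
        using n W(2) limF_eq_below[OF eF x _ \<open>e n = x n\<close>] limF_in_V[OF eF]
        by (cases "W i = V (F i)") (auto simp: PiE_iff)
      then have "e \<in> U" using W(3) \<open>U = U' \<inter> limF F f\<close> eF by auto
      then show "\<exists>y. y \<in> limE F f \<and> y \<in> U" using e(1) by blast
    qed
  qed
qed

theorem mainTheorem14:
  fixes P :: "enat set" and F :: "nat \<Rightarrow> tobj" and f :: "nat \<Rightarrow> nat \<Rightarrow> arr"
  assumes "\<forall>p\<in>P. 3 \<le> p"
    and "fraisse_seq P F f"
  shows "limE F f \<subseteq> {x. tg_endpoint TYPE('h) (limT F f) (limEd F) x}
         \<and> (limT F f) closure_of (limE F f) = limF F f"
  using limE_tg_endpoint[OF assms(2)] limE_dense[OF assms(2,1)] by blast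

end
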